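(* Let $\mathcal G_c$ be the colored union graph of a switched system $(A_k,B_k)_{k=1}^N$ and $X_s\subseteq X$. (1) If $\mathcal G_c$ contains a generalized stem that covers $X_s$, then there is a generalized cactus walking whose head is $X_s$. (2) If $\mathcal G_c$ contains a generalized bud that covers $X_s$, then there is a generalized cactus walking whose head is $X_s$, and the length of the shortest walk in it can be arbitrarily large (i.e., for every $M\in\mathbb N$ there is such a generalized cactus walking all of whose walks have length at least $M$).
   Context: Setting: subsystems $(A_k,B_k)$, $A_k\in\mathbb{R}^{n\times n}$ (or structured), $B_k$ of size $n\times m_k$, $k\in[N]=\{1,\dots,N\}$; $A_k(p,j)$, $B_l(q,j)$ denote entries. Colored union graph $\mathcal G_c$: vertices $X=\{x_1,\dots,x_n\}$ and $U=\bigcup_kU_k$, $U_k=\{u^k_1,\dots,u^k_{m_k}\}$; for each $k$ and each nonzero $A_k(j,q)$ a state edge $(x_q,x_j)$ with color index $k$ (parallel edges of different colors allowed); for each nonzero $B_k(j,q)$ an input edge $(u^k_q,x_j)$ with color index $k$. A state vertex is input-reachable if some path from a vertex of $U$ reaches it. Edges are S-disjoint if their heads are all distinct and edges having the same tail have different color indices. A cycle is a closed walk whose only repeated vertex is its start/end (self-loops allowed). A subgraph covers $X_s$ if its vertex set contains $X_s$. Generalized stem: a subgraph $(V_s,E_s)$ of $\mathcal G_c$ with exactly one input vertex in $V_s$ and no cycle, in which each state vertex of $V_s$ has exactly one ingoing edge in $E_s$, and whose edges are S-disjoint. Generalized bud: a subgraph $(V_s,E_s)$ with no input vertex and exactly one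 cycle, every state vertex of which is input-reachable in $\mathcal G_c$, each state vertex of $V_s$ having exactly one ingoing edge in $E_s$, and whose edges are S-disjoint. Multi-layer dynamic graph $\hat{\mathcal G}_{\bar l}$: layers $0,\dots,\bar l$. Layer 0: $\hat X_0=\{x^{00}_{p0}:p\in[n]\}$, $\hat U_0=\{u^{00}_{k,j0}: j\in[N],k\in[m_j]\}$, edges $(u^{00}_{k,j0},x^{00}_{q0})$ when $B_j(q,k)\ne0$. Layer $i\ge1$: $\hat X_i=\{x^{kt}_{ji}: j\in[n],k\in[N],t\in[N^{i-1}]\}$, $\hat U_i=\{u^{kt}_{j,li}: k,l\in[N],j\in[m_l],t\in[N^{i-1}]\}$, edges $(u^{kt}_{j,li},x^{kt}_{qi})$ when $B_l(q,j)\ne0$. Edges $(x^{k1}_{j1},x^{00}_{p0})$ when $A_k(p,j)\ne0$; for $i\ge 2$, edges $(x^{kt}_{ji},x^{k't'}_{p,i-1})$ when $A_k(p,j)\ne0$, for $k,k'\in[N]$, $t'\in[N^{i-2}]$, $t=(k'-1)N^{i-2}+t'$. An input-state walk is a walk in $\mathcal G_c$ from a vertex of $U$ to a vertex of $X$. For such a walk $p$ of length $k$ with edge colors $i_1,\dots,i_k$ passing through $u^{i_1}_{j_1},x_{j_2},\dots,x_{j_{k+1}}$, its MDG-path $\hat p$ is the unique path in $\hat{\mathcal G}_{\bar l}$ ($\bar l\ge k$) of the form $(u^{i_2,\bullet}_{j_1,i_1,k-1},x^{i_2,\bullet}_{j_2,k-1},x^{i_3,\bullet}_{j_3,k-2},\dots,x^{i_k,1}_{j_k,1},x^{00}_{j_{k+1},0})$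 with copy indices $\bullet$ forced by the edge structure (for $k=1$: $(u^{00}_{j_1,i_10},x^{00}_{j_2,0})$). A collection of input-state walks $\{p_1,\dots,p_k\}$ is a generalized cactus walking if their MDG-paths $\hat p_1,\dots,\hat p_k$ are pairwise vertex-disjoint in $\hat{\mathcal G}_{\bar l}$ with $\bar l\ge\max_i|p_i|$; its head is the set of heads of its walks. *)

theory Defs
  imports Complex_Main
begin

text \<open>Subsystems are indexed by k in {1..N}; state indices by {1..n}; the inputs of
  subsystem k by {1..m k}.  A k p j is the entry (p,j) of A_k and B k q j is the entry
  (q,j) of B_k.\<close>

datatype vert = X nat | U nat nat  \<comment> \<open>X j = x_j;  U k q = u^k_q (input q of subsystem k)\<close>

type_synonym cedge = "vert \<times> nat \<times> vert"  \<comment> \<open>(tail, color index, head)\<close>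

definition Xset :: "nat \<Rightarrow> vert set" where
  "Xset n = {X j | j. j \<in> {1..n}}"

definition Uset :: "nat \<Rightarrow> (nat \<Rightarrow> nat) \<Rightarrow> vert set" where
  "Uset N m = {U k q | k q. k \<in> {1..N} \<and> q \<in> {1..m k}}"

definition gc_V :: "nat \<Rightarrow> nat \<Rightarrow> (nat \<Rightarrow> nat) \<Rightarrow> vert set" where
  "gc_V n N m = Xset n \<union> Uset N m"

definition gc_E :: "nat \<Rightarrow> nat \<Rightarrow> (nat \<Rightarrow> nat)
    \<Rightarrow> (nat \<Rightarrow> nat \<Rightarrow> nat \<Rightarrow> real) \<Rightarrow> (nat \<Rightarrow> nat \<Rightarrow> nat \<Rightarrow> real) \<Rightarrow> cedge set" where
  "gc_E n N m A B =
     {(X q, k, X j) | k j q. k \<in> {1..N} \<and> j \<in> {1..n} \<and> q \<in> {1..n} \<and> A k j q \<noteq> 0}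
   \<union> {(U k q, k, X j) | k j q. k \<in> {1..N} \<and> j \<in> {1..n} \<and> q \<in> {1..m k} \<and> B k j q \<noteq> 0}"

definition tl_of :: "cedge \<Rightarrow> vert" where "tl_of e = fst e"
definition col_of :: "cedge \<Rightarrow> nat" where "col_of e = fst (snd e)"
definition hd_of :: "cedge \<Rightarrow> vert" where "hd_of e = snd (snd e)"

text \<open>A walk is a start vertex together with the list of steps (color of the edge, next vertex).\<close>

type_synonym walk = "vert \<times> (nat \<times> vert) list"

fun is_walk :: "cedge set \<Rightarrow> vert \<Rightarrow> (nat \<times> vert) list \<Rightarrow> bool" where
  "is_walk E v [] = True"
| "is_walk E v ((c, w) # rest) = ((v, c, w) \<in> E \<and> is_walk E w rest)"

fun walk_edges :: "vert \<Rightarrow> (nat \<times> vert) list \<Rightarrow> cedge set" where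
  "walk_edges v [] = {}"
| "walk_edges v ((c, w) # rest) = insert (v, c, w) (walk_edges w rest)"

definition is_path :: "cedge set \<Rightarrow> vert \<Rightarrow> (nat \<times> vert) list \<Rightarrow> bool" where
  "is_path E v es = (is_walk E v es \<and> distinct (v # map snd es))"

definition is_cycle :: "cedge set \<Rightarrow> vert \<Rightarrow> (nat \<times> vert) list \<Rightarrow> bool" where
  "is_cycle E v es = (es \<noteq> [] \<and> is_walk E v es \<and> snd (last es) = v \<and> distinct (map snd es))"

text \<open>Cycles are identified up to the choice of starting point, i.e. by their edge sets.\<close>
definition cycles :: "cedge set \<Rightarrow> cedge set set" where
  "cycles E = {walk_edges v es | v es. is_cycle E v es}"

definition input_reachable :: "nat \<Rightarrow> nat \<Rightarrow> (nat \<Rightarrow> nat)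
    \<Rightarrow> (nat \<Rightarrow> nat \<Rightarrow> nat \<Rightarrow> real) \<Rightarrow> (nat \<Rightarrow> nat \<Rightarrow> nat \<Rightarrow> real) \<Rightarrow> vert \<Rightarrow> bool" where
  "input_reachable n N m A B x =
     (\<exists>u es. u \<in> Uset N m \<and> es \<noteq> [] \<and> is_path (gc_E n N m A B) u es \<and> snd (last es) = x)"

definition is_subgraph :: "vert set \<Rightarrow> cedge set \<Rightarrow> vert set \<Rightarrow> cedge set \<Rightarrow> bool" where
  "is_subgraph V E Vs Es = (Vs \<subseteq> V \<and> Es \<subseteq> E \<and> (\<forall>e\<in>Es. tl_of e \<in> Vs \<and> hd_of e \<in> Vs))"

definition S_disjoint :: "cedge set \<Rightarrow> bool" where
  "S_disjoint Es = (\<forall>e1\<in>Es. \<forall>e2\<in>Es. e1 \<noteq> e2 \<longrightarrow>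
      hd_of e1 \<noteq> hd_of e2 \<and> (tl_of e1 = tl_of e2 \<longrightarrow> col_of e1 \<noteq> col_of e2))"

definition one_ingoing :: "nat \<Rightarrow> vert set \<Rightarrow> cedge set \<Rightarrow> bool" where
  "one_ingoing n Vs Es = (\<forall>x\<in>Vs \<inter> Xset n. card {e\<in>Es. hd_of e = x} = 1)"

definition gen_stem :: "nat \<Rightarrow> nat \<Rightarrow> (nat \<Rightarrow> nat)
    \<Rightarrow> (nat \<Rightarrow> nat \<Rightarrow> nat \<Rightarrow> real) \<Rightarrow> (nat \<Rightarrow> nat \<Rightarrow> nat \<Rightarrow> real)
    \<Rightarrow> vert set \<Rightarrow> cedge set \<Rightarrow> bool" where
  "gen_stem n N m A B Vs Es =
     (is_subgraph (gc_V n N m) (gc_E n N m A B) Vs Es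
      \<and> card (Vs \<inter> Uset N m) = 1
      \<and> cycles Es = {}
      \<and> one_ingoing n Vs Es
      \<and> S_disjoint Es)"

definition gen_bud :: "nat \<Rightarrow> nat \<Rightarrow> (nat \<Rightarrow> nat)
    \<Rightarrow> (nat \<Rightarrow> nat \<Rightarrow> nat \<Rightarrow> real) \<Rightarrow> (nat \<Rightarrow> nat \<Rightarrow> nat \<Rightarrow> real)
    \<Rightarrow> vert set \<Rightarrow> cedge set \<Rightarrow> bool" where
  "gen_bud n N m A B Vs Es =
     (is_subgraph (gc_V n N m) (gc_E n N m A B) Vs Es
      \<and> Vs \<inter> Uset N m = {}
      \<and> (\<exists>!C. C \<in> cycles Es)
      \<and> (\<forall>x\<in>Vs \<inter> Xset n. input_reachable n N m A B x)
      \<and> one_ingoing n Vs Es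
      \<and> S_disjoint Es)"

text \<open>MX j k t i = x^{kt}_{j i};  MU j l k t i = u^{kt}_{j,l i}.  Layer-0 vertices have k = t = 0.\<close>
datatype mvert = MX nat nat nat nat | MU nat nat nat nat nat

text \<open>Copy index of a vertex in layer i \<ge> 1, given the colors of the vertices of the
  path in layers i-1, ..., 1 (in this order): t = 1 in layer 1, and
  t = (k'-1) N^(i-2) + t' in layer i \<ge> 2.\<close>
fun copy_idx :: "nat \<Rightarrow> nat list \<Rightarrow> nat" where
  "copy_idx N [] = 1"
| "copy_idx N (d # ds) = (d - 1) * N ^ length ds + copy_idx N ds"

fun xidx :: "vert \<Rightarrow> nat" where
  "xidx (X j) = j"
| "xidx (U k q) = 0"

text \<open>MDG images of the state vertices of a walk; argument is the suffix of the step list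
  starting at the edge entering the vertex.\<close>
fun mdg_states :: "nat \<Rightarrow> (nat \<times> vert) list \<Rightarrow> mvert list" where
  "mdg_states N [] = []"
| "mdg_states N ((c, w) # rest) =
     (if rest = [] then MX (xidx w) 0 0 0
      else MX (xidx w) (fst (hd rest)) (copy_idx N (map fst (tl rest))) (length rest))
     # mdg_states N rest"

fun mdg_input :: "nat \<Rightarrow> vert \<Rightarrow> (nat \<times> vert) list \<Rightarrow> mvert" where
  "mdg_input N (U l j) ((c, w) # rest) =
     (if rest = [] then MU j c 0 0 0
      else MU j c (fst (hd rest)) (copy_idx N (map fst (tl rest))) (length rest))"
| "mdg_input N v es = MU 0 0 0 0 0"

definition mdg_path :: "nat \<Rightarrow> walk \<Rightarrow> mvert list" where
  "mdg_path N p = mdg_input N (fst p) (snd p) # mdg_states N (snd p)"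

definition input_state_walk :: "nat \<Rightarrow> nat \<Rightarrow> (nat \<Rightarrow> nat)
    \<Rightarrow> (nat \<Rightarrow> nat \<Rightarrow> nat \<Rightarrow> real) \<Rightarrow> (nat \<Rightarrow> nat \<Rightarrow> nat \<Rightarrow> real) \<Rightarrow> walk \<Rightarrow> bool" where
  "input_state_walk n N m A B p =
     (fst p \<in> Uset N m \<and> snd p \<noteq> [] \<and> is_walk (gc_E n N m A B) (fst p) (snd p)
      \<and> snd (last (snd p)) \<in> Xset n)"

definition walk_len :: "walk \<Rightarrow> nat" where "walk_len p = length (snd p)"

definition walk_head :: "walk \<Rightarrow> vert" where "walk_head p = snd (last (snd p))"

definition gen_cactus_walking :: "nat \<Rightarrow> nat \<Rightarrow> (nat \<Rightarrow> nat)
    \<Rightarrow> (nat \<Rightarrow> nat \<Rightarrow> nat \<Rightarrow> real) \<Rightarrow> (nat \<Rightarrow> nat \<Rightarrow> nat \<Rightarrow> real) \<Rightarrow> walk set \<Rightarrow> bool" where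
  "gen_cactus_walking n N m A B P =
     (finite P \<and> (\<forall>p\<in>P. input_state_walk n N m A B p)
      \<and> (\<forall>p\<in>P. \<forall>q\<in>P. p \<noteq> q \<longrightarrow> set (mdg_path N p) \<inter> set (mdg_path N q) = {}))"

end

theory Submission
  imports Defs
begin

text \<open>The vertex at position i of the MDG-path of an input-state walk records the vertex at
  position i of the walk together with the colors of all remaining edges (the copy index is a
  base-N code of that color sequence). So two MDG-paths meet only if the walks have suffixes
  with a common first vertex and the same colors. In a generalized stem or bud, S-disjointness
  makes a walk inside the subgraph determined by its first vertex and its colors, so walks with
  such matching suffixes have the same head; and since every state vertex has exactly one
  in-edge, walks to a vertex can be traced backwards.

  In a stem, tracing back from x must leave the state vertices because there is no cycle, and
  it can only leave through the input. In a bud, tracing back eventually winds around the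
  unique cycle. Fix one input path P0 that meets the cycle first at v, and extend it by
  backward walks from v to each x in Xs, all longer than |Vs| + M. A suffix starting on P0
  before v cannot match a suffix starting inside such a backward walk: the latter is long
  enough to start on the cycle, which P0 avoids before v.\<close>

section \<open>Walks and their colored suffixes\<close>

definition walk_end :: "walk \<Rightarrow> vert" where
  "walk_end p = last (fst p # map snd (snd p))"

lemma is_walk_append:
  "is_walk E s (xs @ ys) \<longleftrightarrow> is_walk E s xs \<and> is_walk E (walk_end (s, xs)) ys"
proof (induction xs arbitrary: s)
  case Nil
  then show ?case by (simp add: walk_end_def)
next
  case (Cons a xs)
  then show ?case by (cases a) (auto simp: walk_end_def)
qed

lemma is_walk_mono: "is_walk E s es \<Longrightarrow> E \<subseteq> E' \<Longrightarrow> is_walk E' s es"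
  by (induction E s es rule: is_walk.induct) auto

lemma is_walk_drop:
  "is_walk E s es \<Longrightarrow> i \<le> length es \<Longrightarrow> is_walk E ((s # map snd es) ! i) (drop i es)"
proof (induction es arbitrary: s i)
  case Nil
  then show ?case by simp
next
  case (Cons a es)
  then show ?case by (cases a; cases i) auto
qed

lemma walk_head_eq_walk_end: "snd p \<noteq> [] \<Longrightarrow> walk_head p = walk_end p"
  by (simp add: walk_head_def walk_end_def last_map)

lemma walk_end_append: "walk_end (s, xs @ ys) = walk_end (walk_end (s, xs), ys)"
  by (simp add: walk_end_def)

lemma walk_end_take:
  "k \<le> length es \<Longrightarrow> walk_end (s, take k es) = (s # map snd es) ! k"
proof (induction es arbitrary: s k)
  case Nil
  then show ?case by (simp add: walk_end_def)
next
  case (Cons a es)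
  then show ?case by (cases k) (auto simp: walk_end_def)
qed

lemma walk_end_drop:
  "i \<le> length es \<Longrightarrow> walk_end ((s # map snd es) ! i, drop i es) = walk_end (s, es)"
proof (induction es arbitrary: s i)
  case Nil
  then show ?case by simp
next
  case (Cons a es)
  then show ?case by (cases i) (auto simp: walk_end_def)
qed

definition colored_suffix :: "walk \<Rightarrow> nat \<Rightarrow> vert \<times> nat list" where
  "colored_suffix p i = ((fst p # map snd (snd p)) ! i, map fst (drop i (snd p)))"

lemma colored_suffix_append_low:
  "i < length xs \<Longrightarrow>
   colored_suffix (s, xs @ ys) i = ((s # map snd xs) ! i, map fst (drop i xs) @ map fst ys)"
  by (auto simp: colored_suffix_def nth_Cons' nth_append)

lemma colored_suffix_append_high:
  "length xs \<le> i \<Longrightarrow>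
   colored_suffix (s, xs @ ys) i = colored_suffix (walk_end (s, xs), ys) (i - length xs)"
  by (auto simp: colored_suffix_def walk_end_def nth_Cons' nth_append last_conv_nth)

lemma is_path_first_entry:
  assumes path: "is_path E u es" and ends_in: "walk_end (u, es) \<in> Z"
  obtains P0 where "is_walk E u P0" "distinct (u # map snd P0)" "walk_end (u, P0) \<in> Z"
    "\<And>i. i < length P0 \<Longrightarrow> (u # map snd P0) ! i \<notin> Z"
proof -
  have "\<exists>k. k \<le> length es \<and> (u # map snd es) ! k \<in> Z"
    using ends_in walk_end_take[of "length es" es u] by auto
  then obtain k where k: "k \<le> length es" "(u # map snd es) ! k \<in> Z"
    and before: "\<And>i. i < k \<Longrightarrow> (u # map snd es) ! i \<notin> Z"
    using exists_least_iff[of "\<lambda>k. k \<le> length es \<and> (u # map snd es) ! k \<in> Z"] by auto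
  have prefix: "u # map snd (take k es) = take (Suc k) (u # map snd es)"
    by (simp add: take_map)
  have "is_walk E u (take k es)"
    using path is_walk_append[of E u "take k es" "drop k es"] by (simp add: is_path_def)
  moreover have "distinct (u # map snd (take k es))"
    using path distinct_take[of "u # map snd es" "Suc k"] unfolding prefix is_path_def by blast
  moreover have "walk_end (u, take k es) \<in> Z"
    using k walk_end_take by simp
  moreover have "(u # map snd (take k es)) ! i \<notin> Z" if "i < length (take k es)" for i
  proof -
    have "i < k"
      using that by simp
    then show ?thesis
      using before[of i] unfolding prefix by (simp del: take_Suc_Cons)
  qed
  ultimately show ?thesis
    by (rule that)
qed

lemma S_disjoint_edge_eq:
  "S_disjoint Es \<Longrightarrow> (a, c, b) \<in> Es \<Longrightarrow> (a, c, b') \<in> Es \<Longrightarrow> b = b'"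
  unfolding S_disjoint_def tl_of_def col_of_def hd_of_def by force

lemma S_disjoint_walk_eq:
  assumes "S_disjoint Es"
  shows "is_walk Es s r1 \<Longrightarrow> is_walk Es s r2 \<Longrightarrow> map fst r1 = map fst r2 \<Longrightarrow> r1 = r2"
proof (induction r1 arbitrary: s r2)
  case Nil
  then show ?case by simp
next
  case (Cons a r1)
  obtain c w r2' w' where r2: "a = (c, w)" "r2 = (c, w') # r2'"
    using Cons.prems(3) by (cases a; cases r2) auto
  with Cons.prems have "w = w'"
    using S_disjoint_edge_eq[OF assms] by auto
  with Cons r2 show ?case by auto
qed

lemma S_disjoint_walk_end_eq:
  assumes "S_disjoint Es" "is_walk Es (fst p) (snd p)" "is_walk Es (fst q) (snd q)"
    and "i \<le> walk_len p" "j \<le> walk_len q" "colored_suffix p i = colored_suffix q j"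
  shows "walk_end p = walk_end q"
proof -
  obtain s es t fs where pq: "p = (s, es)" "q = (t, fs)" by (cases p; cases q)
  have start: "(s # map snd es) ! i = (t # map snd fs) ! j"
    and colors: "map fst (drop i es) = map fst (drop j fs)"
    using assms(6) pq by (simp_all add: colored_suffix_def)
  have "is_walk Es ((s # map snd es) ! i) (drop i es)"
    using is_walk_drop assms(2,4) pq by (simp add: walk_len_def)
  moreover have "is_walk Es ((s # map snd es) ! i) (drop j fs)"
    using is_walk_drop assms(3,5) pq start by (simp add: walk_len_def)
  ultimately have "drop i es = drop j fs"
    using S_disjoint_walk_eq[OF assms(1)] colors by blast
  then show ?thesis
    using walk_end_drop[of i es s] walk_end_drop[of j fs t] assms(4,5) pq start
    by (simp add: walk_len_def)
qed

section \<open>Decoding MDG-paths\<close>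

lemma copy_idx_bounds:
  "set ds \<subseteq> {1..N} \<Longrightarrow> 1 \<le> copy_idx N ds \<and> copy_idx N ds \<le> N ^ length ds"
proof (induction ds)
  case Nil
  then show ?case by simp
next
  case (Cons d ds)
  let ?B = "N ^ length ds"
  have d: "1 \<le> d" "d \<le> N" and c: "copy_idx N ds \<le> ?B" using Cons by auto
  have "(d - 1) * ?B + copy_idx N ds \<le> (d - 1) * ?B + ?B" using c by simp
  also have "\<dots> = d * ?B" using d by (cases d) auto
  also have "\<dots> \<le> N * ?B" using d by simp
  finally show ?case using Cons by simp
qed

lemma mult_add_eq_imp_eq:
  fixes a a' r r' B :: nat
  assumes "a * B + r = a' * B + r'" "r < B" "r' < B"
  shows "a = a' \<and> r = r'"
proof -
  have "a = (a * B + r) div B" "r = (a * B + r) mod B"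
    and "a' = (a' * B + r') div B" "r' = (a' * B + r') mod B"
    using assms(2,3) by simp_all
  then show ?thesis using assms(1) by metis
qed

lemma copy_idx_inj:
  "set ds \<subseteq> {1..N} \<Longrightarrow> set ds' \<subseteq> {1..N} \<Longrightarrow> length ds = length ds'
   \<Longrightarrow> copy_idx N ds = copy_idx N ds' \<Longrightarrow> ds = ds'"
proof (induction ds arbitrary: ds')
  case Nil
  then show ?case by simp
next
  case (Cons d ds)
  obtain d' ds2 where ds': "ds' = d' # ds2" using Cons.prems by (cases ds') auto
  let ?B = "N ^ length ds"
  have len: "length ds2 = length ds" using Cons.prems ds' by simp
  have c: "1 \<le> copy_idx N ds" "copy_idx N ds \<le> ?B"
    and c': "1 \<le> copy_idx N ds2" "copy_idx N ds2 \<le> ?B"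
    using copy_idx_bounds[of ds N] copy_idx_bounds[of ds2 N] Cons.prems ds' len by auto
  \<comment> \<open>copy_idx N ds - 1 is the number with base-N digits d - 1 for d in ds\<close>
  have "(d - 1) * ?B + (copy_idx N ds - 1) = (d' - 1) * ?B + (copy_idx N ds2 - 1)"
    (is "?l = ?r") using Cons.prems ds' len c c' by simp
  then have "d - 1 = d' - 1 \<and> copy_idx N ds - 1 = copy_idx N ds2 - 1"
    by (rule mult_add_eq_imp_eq) (use c c' in auto)
  then have "d = d'" "ds = ds2"
    using Cons.IH[of ds2] Cons.prems ds' len c c' by auto
  then show ?case using ds' by simp
qed

lemma colors_eq_if_codes_eq:
  assumes "set (map fst r) \<subseteq> {1..N}" "set (map fst r') \<subseteq> {1..N}" "r \<noteq> []" "r' \<noteq> []"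
    and "fst (hd r) = fst (hd r')" "copy_idx N (map fst (tl r)) = copy_idx N (map fst (tl r'))"
    and "length r = length r'"
  shows "map fst r = map fst r'"
proof -
  obtain a r1 a' r1' where "r = a # r1" "r' = a' # r1'" using assms(3,4) by (meson list.exhaust)
  with assms show ?thesis using copy_idx_inj[of "map fst r1" N "map fst r1'"] by auto
qed

lemma hd_mdg_states_inj:
  assumes "hd (mdg_states N ((c, w) # r)) = hd (mdg_states N ((c', w') # r'))"
    and "set (map fst r) \<subseteq> {1..N}" "set (map fst r') \<subseteq> {1..N}"
  shows "xidx w = xidx w' \<and> map fst r = map fst r'"
  using assms colors_eq_if_codes_eq[of r N r'] by (auto split: if_splits)

lemma mdg_input_inj:
  assumes "mdg_input N (U l j) ((c, w) # r) = mdg_input N (U l' j') ((c', w') # r')"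
    and "set (map fst r) \<subseteq> {1..N}" "set (map fst r') \<subseteq> {1..N}"
  shows "j = j' \<and> c = c' \<and> map fst r = map fst r'"
  using assms colors_eq_if_codes_eq[of r N r'] by (auto split: if_splits)

lemma length_mdg_states: "length (mdg_states N es) = length es"
  by (induction N es rule: mdg_states.induct) auto

lemma nth_mdg_states: "k < length es \<Longrightarrow> mdg_states N es ! k = hd (mdg_states N (drop k es))"
proof (induction es arbitrary: k)
  case Nil
  then show ?case by simp
next
  case (Cons a es)
  then show ?case by (cases a; cases k) auto
qed

lemma mdg_states_not_input: "mdg_input N s es \<notin> set (mdg_states N fs)"
proof -
  have "\<exists>a b c d. y = MX a b c d" if "y \<in> set (mdg_states N fs)" for y
    using that by (induction N fs rule: mdg_states.induct) auto
  moreover have "\<exists>a b c d e. mdg_input N s es = MU a b c d e"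
    by (induction N s es rule: mdg_input.induct) auto
  ultimately show ?thesis by force
qed

lemma is_walk_gc_E_colors: "is_walk (gc_E n N m A B) s es \<Longrightarrow> set (map fst es) \<subseteq> {1..N}"
  by (induction "gc_E n N m A B" s es rule: is_walk.induct) (auto simp: gc_E_def)

lemma is_walk_gc_E_states: "is_walk (gc_E n N m A B) s es \<Longrightarrow> w \<in> set (map snd es) \<Longrightarrow> \<exists>j. w = X j"
  by (induction "gc_E n N m A B" s es rule: is_walk.induct) (auto simp: gc_E_def)

lemma gc_E_input_color: "(U l j, c, w) \<in> gc_E n N m A B \<Longrightarrow> c = l"
  by (auto simp: gc_E_def)

lemma mdg_input_eq_imp_colored_suffix_eq:
  assumes p: "input_state_walk n N m A B (s, es)" and q: "input_state_walk n N m A B (t, fs)"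
    and eq: "mdg_input N s es = mdg_input N t fs"
  shows "colored_suffix (s, es) 0 = colored_suffix (t, fs) 0"
proof -
  have walks: "is_walk (gc_E n N m A B) s es" "is_walk (gc_E n N m A B) t fs"
    using p q by (simp_all add: input_state_walk_def)
  obtain l a l' a' where s: "s = U l a" and t: "t = U l' a'"
    using p q by (auto simp: input_state_walk_def Uset_def)
  obtain c w r c' w' r' where es: "es = (c, w) # r" and fs: "fs = (c', w') # r'"
    using p q by (metis input_state_walk_def list.exhaust prod.exhaust snd_conv)
  have "c = l" "c' = l'"
    using walks s t es fs gc_E_input_color by auto
  moreover have "a = a' \<and> c = c' \<and> map fst r = map fst r'"
    using eq s t es fs is_walk_gc_E_colors[OF walks(1)] is_walk_gc_E_colors[OF walks(2)]
    by (intro mdg_input_inj[of N l a c w r l' a' c' w' r']) auto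
  ultimately show ?thesis
    using s t es fs by (simp add: colored_suffix_def)
qed

lemma mdg_states_nth_eq_imp_colored_suffix_eq:
  assumes walks: "is_walk (gc_E n N m A B) s es" "is_walk (gc_E n N m A B) t fs"
    and ij: "i < length es" "j < length fs"
    and eq: "mdg_states N es ! i = mdg_states N fs ! j"
  shows "colored_suffix (s, es) (Suc i) = colored_suffix (t, fs) (Suc j)"
proof -
  obtain c w c' w' where cw: "es ! i = (c, w)" and cw': "fs ! j = (c', w')"
    by (meson surj_pair)
  have drops: "drop i es = (c, w) # drop (Suc i) es" "drop j fs = (c', w') # drop (Suc j) fs"
    using ij cw cw' by (metis Cons_nth_drop_Suc)+
  have "hd (mdg_states N ((c, w) # drop (Suc i) es)) = hd (mdg_states N ((c', w') # drop (Suc j) fs))"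
    using eq ij drops by (simp add: nth_mdg_states)
  moreover have "set (map fst (drop k gs)) \<subseteq> {1..N}"
    if "is_walk (gc_E n N m A B) v gs" for v gs k
    using is_walk_gc_E_colors[OF that] by (metis drop_map set_drop_subset subset_trans)
  ultimately have "xidx w = xidx w'"
    and suffix_colors: "map fst (drop (Suc i) es) = map fst (drop (Suc j) fs)"
    using hd_mdg_states_inj walks by blast+
  moreover have "w \<in> set (map snd es)" "w' \<in> set (map snd fs)"
    using ij cw cw' nth_mem[of i es] nth_mem[of j fs] by force+
  then obtain a a' where "w = X a" "w' = X a'"
    using is_walk_gc_E_states[OF walks(1)] is_walk_gc_E_states[OF walks(2)] by meson
  ultimately have "w = w'" by simp
  then show ?thesis
    using ij cw cw' suffix_colors by (simp add: colored_suffix_def)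
qed

lemma mdg_path_nth_eq_imp_colored_suffix_eq:
  assumes p: "input_state_walk n N m A B (s, es)" and q: "input_state_walk n N m A B (t, fs)"
    and ij: "i \<le> length es" "j \<le> length fs"
    and eq: "mdg_path N (s, es) ! i = mdg_path N (t, fs) ! j"
  shows "colored_suffix (s, es) i = colored_suffix (t, fs) j"
proof (cases i; cases j)
  assume "i = 0" "j = 0"
  then show ?thesis
    using mdg_input_eq_imp_colored_suffix_eq[OF p q] eq by (simp add: mdg_path_def)
next
  fix i' j' assume "i = Suc i'" "j = Suc j'"
  then show ?thesis
    using mdg_states_nth_eq_imp_colored_suffix_eq[of n N m A B s es t fs i' j'] p q ij eq
    by (simp add: mdg_path_def input_state_walk_def)
qed (use ij eq mdg_states_not_input[of N s es fs] mdg_states_not_input[of N t fs es] in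
    \<open>auto simp: mdg_path_def in_set_conv_nth length_mdg_states Suc_le_eq\<close>)

lemma finite_Xset: "finite (Xset n)"
proof -
  have "Xset n = X ` {1..n}" by (auto simp: Xset_def)
  then show ?thesis by simp
qed

lemma length_mdg_path: "length (mdg_path N p) = Suc (walk_len p)"
  by (simp add: mdg_path_def length_mdg_states walk_len_def)

lemma gen_cactus_walking_image:
  assumes walks: "\<And>x. x \<in> Xs \<Longrightarrow> input_state_walk n N m A B (W x)"
    and heads: "\<And>x. x \<in> Xs \<Longrightarrow> walk_head (W x) = x"
    and separated: "\<And>x y i j. x \<in> Xs \<Longrightarrow> y \<in> Xs \<Longrightarrow> i \<le> walk_len (W x) \<Longrightarrow> j \<le> walk_len (W y)
      \<Longrightarrow> colored_suffix (W x) i = colored_suffix (W y) j \<Longrightarrow> x = y"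
  shows "gen_cactus_walking n N m A B (W ` Xs) \<and> walk_head ` W ` Xs = Xs"
proof -
  have "Xs \<subseteq> Xset n"
    using walks heads by (auto simp: input_state_walk_def walk_head_def)
  then have "finite Xs"
    using finite_Xset finite_subset by blast
  moreover have "set (mdg_path N (W x)) \<inter> set (mdg_path N (W y)) = {}"
    if xy: "x \<in> Xs" "y \<in> Xs" "W x \<noteq> W y" for x y
  proof (rule ccontr)
    assume "set (mdg_path N (W x)) \<inter> set (mdg_path N (W y)) \<noteq> {}"
    then obtain i j where "i \<le> walk_len (W x)" "j \<le> walk_len (W y)"
      and "mdg_path N (W x) ! i = mdg_path N (W y) ! j"
      by (auto simp: in_set_conv_nth length_mdg_path less_Suc_eq_le) (metis)
    then have "colored_suffix (W x) i = colored_suffix (W y) j"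
      using mdg_path_nth_eq_imp_colored_suffix_eq walks xy
      by (metis prod.collapse walk_len_def)
    then show False
      using separated xy \<open>i \<le> walk_len (W x)\<close> \<open>j \<le> walk_len (W y)\<close> by blast
  qed
  ultimately have "gen_cactus_walking n N m A B (W ` Xs)"
    using walks by (auto simp: gen_cactus_walking_def)
  moreover have "walk_head ` W ` Xs = Xs"
    using heads by (force simp: image_image)
  ultimately show ?thesis by blast
qed

section \<open>Edge sets in which every state has a unique in-edge\<close>

lemma walk_edges_hd: "e \<in> walk_edges v es \<Longrightarrow> hd_of e \<in> set (map snd es)"
  by (induction v es rule: walk_edges.induct) (auto simp: hd_of_def)

lemma funpow_eventually_periodic:
  assumes "finite S" "\<And>t. t \<le> card S \<Longrightarrow> (f ^^ t) x \<in> S"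
  obtains a p where "0 < p" "a + p \<le> card S" "(f ^^ p) ((f ^^ a) x) = (f ^^ a) x"
proof -
  have "\<not> inj_on (\<lambda>t. (f ^^ t) x) {0..card S}"
  proof
    assume "inj_on (\<lambda>t. (f ^^ t) x) {0..card S}"
    moreover have "(\<lambda>t. (f ^^ t) x) ` {0..card S} \<subseteq> S" using assms(2) by auto
    ultimately have "card {0..card S} \<le> card S" using card_inj_on_le assms(1) by blast
    then show False by simp
  qed
  then obtain a b where "a < b" "b \<le> card S" "(f ^^ a) x = (f ^^ b) x"
    unfolding inj_on_def by (metis atLeastAtMost_iff linorder_neqE_nat)
  moreover from this have "(f ^^ (b - a)) ((f ^^ a) x) = (f ^^ a) x"
    by (metis funpow_add comp_apply le_add_diff_inverse2 less_imp_le)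
  ultimately show ?thesis
    using that[of "b - a" a] by simp
qed

lemma funpow_minimal_period:
  fixes f :: "'a \<Rightarrow> 'a"
  assumes p: "0 < p" "(f ^^ p) z = z"
  obtains q where "0 < q" "(f ^^ q) z = z" "q \<le> p" "inj_on (\<lambda>t. (f ^^ t) z) {..<q}"
proof -
  define q where "q = (LEAST q. 0 < q \<and> (f ^^ q) z = z)"
  have q: "0 < q" "(f ^^ q) z = z"
    using LeastI[of "\<lambda>q. 0 < q \<and> (f ^^ q) z = z" p] p unfolding q_def by simp_all
  have "q \<le> p"
    unfolding q_def by (rule Least_le) (use p in simp)
  have minimal: "(f ^^ t) z \<noteq> z" if "0 < t" "t < q" for t
    using not_less_Least[of t "\<lambda>q. 0 < q \<and> (f ^^ q) z = z"] that unfolding q_def by blast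
  have no_repeat: "(f ^^ s) z \<noteq> (f ^^ t) z" if st: "s < t" "t < q" for s t
  proof
    assume eq: "(f ^^ s) z = (f ^^ t) z"
    have "(f ^^ (q - t + s)) z = (f ^^ (q - t)) ((f ^^ s) z)"
      by (simp only: funpow_add comp_apply)
    also have "\<dots> = (f ^^ (q - t + t)) z"
      by (simp only: eq funpow_add comp_apply)
    also have "\<dots> = z"
      using st q by simp
    finally have "(f ^^ (q - t + s)) z = z" .
    moreover have "(f ^^ (q - t + s)) z \<noteq> z"
      using st by (intro minimal) arith+
    ultimately show False
      by contradiction
  qed
  have "inj_on (\<lambda>t. (f ^^ t) z) {..<q}"
  proof (rule inj_onI)
    fix s t assume "s \<in> {..<q}" "t \<in> {..<q}" "(f ^^ s) z = (f ^^ t) z"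
    then show "s = t"
      using no_repeat[of s t] no_repeat[of t s] by (cases s t rule: linorder_cases) auto
  qed
  with q \<open>q \<le> p\<close> show ?thesis
    using that by blast
qed

locale unique_in_edges =
  fixes Es :: "cedge set" and S :: "vert set"
  assumes S_disjoint: "S_disjoint Es"
    and in_edge_exists: "\<And>x. x \<in> S \<Longrightarrow> \<exists>e\<in>Es. hd_of e = x"
begin

definition in_edge :: "vert \<Rightarrow> cedge" where
  "in_edge x = (THE e. e \<in> Es \<and> hd_of e = x)"

definition parent :: "vert \<Rightarrow> vert" where
  "parent x = tl_of (in_edge x)"

definition parent_color :: "vert \<Rightarrow> nat" where
  "parent_color x = col_of (in_edge x)"

lemma in_edge_eq:
  assumes "(a, c, b) \<in> Es"
  shows "in_edge b = (a, c, b)"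
  unfolding in_edge_def
proof (rule the_equality)
  show "(a, c, b) \<in> Es \<and> hd_of (a, c, b) = b"
    using assms by (simp add: hd_of_def)
next
  fix e assume e: "e \<in> Es \<and> hd_of e = b"
  show "e = (a, c, b)"
  proof (rule ccontr)
    assume "e \<noteq> (a, c, b)"
    then have "hd_of e \<noteq> hd_of (a, c, b)"
      using S_disjoint e assms unfolding S_disjoint_def by blast
    then show False
      using e by (simp add: hd_of_def)
  qed
qed

lemma parent_eq: "(a, c, b) \<in> Es \<Longrightarrow> parent b = a \<and> parent_color b = c"
  by (simp add: parent_def parent_color_def in_edge_eq tl_of_def col_of_def)

lemma parent_edge: "x \<in> S \<Longrightarrow> (parent x, parent_color x, x) \<in> Es"
  using in_edge_exists parent_eq by (force simp: hd_of_def)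

lemma walk_start_eq_parent_funpow: "is_walk Es w r \<Longrightarrow> (parent ^^ length r) (walk_end (w, r)) = w"
proof (induction r arbitrary: w)
  case Nil
  then show ?case by (simp add: walk_end_def)
next
  case (Cons a r)
  obtain c v where a: "a = (c, v)" by (cases a)
  then have "(parent ^^ length r) (walk_end (v, r)) = v" and "parent v = w"
    using Cons parent_eq by auto
  then show ?case
    using a by (simp add: walk_end_def funpow_swap1)
qed

fun back_walk :: "nat \<Rightarrow> vert \<Rightarrow> (nat \<times> vert) list" where
  "back_walk 0 x = []"
| "back_walk (Suc j) x = (parent_color ((parent ^^ j) x), (parent ^^ j) x) # back_walk j x"

lemma length_back_walk: "length (back_walk j x) = j"
  by (induction j) auto

lemma is_walk_back_walk:
  "(\<And>t. t < j \<Longrightarrow> (parent ^^ t) x \<in> S) \<Longrightarrow> is_walk Es ((parent ^^ j) x) (back_walk j x)"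
  by (induction j) (auto intro: parent_edge)

lemma walk_end_back_walk: "walk_end ((parent ^^ j) x, back_walk j x) = x"
  by (induction j) (auto simp: walk_end_def)

lemma set_back_walk: "set (map snd (back_walk j x)) = {(parent ^^ t) x | t. t < j}"
  by (induction j) (auto simp: less_Suc_eq)

lemma distinct_back_walk:
  "inj_on (\<lambda>t. (parent ^^ t) x) {..<j} \<Longrightarrow> distinct (map snd (back_walk j x))"
proof (induction j)
  case 0
  then show ?case by simp
next
  case (Suc j)
  have "inj_on (\<lambda>t. (parent ^^ t) x) {..<j}"
    using Suc.prems by (rule inj_on_subset) auto
  then have "distinct (map snd (back_walk j x))"
    by (rule Suc.IH)
  moreover have "(parent ^^ j) x \<notin> set (map snd (back_walk j x))"
  proof
    assume "(parent ^^ j) x \<in> set (map snd (back_walk j x))"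
    then obtain t where "t < j" "(parent ^^ j) x = (parent ^^ t) x"
      unfolding set_back_walk by blast
    then show False
      using inj_onD[OF Suc.prems] by fastforce
  qed
  ultimately show ?case by simp
qed

lemma in_edge_mem_back_walk:
  "0 < j \<Longrightarrow> (parent x, parent_color x, x) \<in> walk_edges ((parent ^^ j) x) (back_walk j x)"
proof (induction j)
  case 0
  then show ?case by simp
next
  case (Suc j)
  then show ?case by (cases "j = 0") simp_all
qed

lemma periodic_cycle:
  assumes p: "0 < p" "(parent ^^ p) z = z" and in_S: "\<And>t. t < p \<Longrightarrow> (parent ^^ t) z \<in> S"
  obtains C where "C \<in> cycles Es" "(parent z, parent_color z, z) \<in> C"
    "\<And>e. e \<in> C \<Longrightarrow> \<exists>t<p. hd_of e = (parent ^^ t) z"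
proof -
  obtain q where q: "0 < q" "(parent ^^ q) z = z" "q \<le> p"
    and inj: "inj_on (\<lambda>t. (parent ^^ t) z) {..<q}"
    using funpow_minimal_period[OF p] by blast
  define es where "es = back_walk q z"
  have walk: "is_walk Es z es"
    using is_walk_back_walk[of q z] in_S q unfolding es_def by simp
  have ne: "es \<noteq> []"
    using q length_back_walk[of q z] unfolding es_def by auto
  have "snd (last es) = z"
    using walk_end_back_walk[of q z] ne q unfolding es_def by (simp add: walk_end_def last_map)
  then have "is_cycle Es z es"
    using walk ne distinct_back_walk[OF inj] unfolding is_cycle_def es_def by simp
  then have "walk_edges z es \<in> cycles Es"
    unfolding cycles_def by blast
  moreover have "(parent z, parent_color z, z) \<in> walk_edges z es"
    using in_edge_mem_back_walk[of q z] q unfolding es_def by simp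
  moreover have "\<exists>t<p. hd_of e = (parent ^^ t) z" if e: "e \<in> walk_edges z es" for e
  proof -
    obtain t where "t < q" "hd_of e = (parent ^^ t) z"
      using walk_edges_hd[OF e] unfolding es_def set_back_walk by blast
    then show ?thesis
      using q(3) by (intro exI[of _ t]) simp
  qed
  ultimately show ?thesis
    by (rule that)
qed

lemma orbit_leaves_if_acyclic:
  assumes "finite S" "cycles Es = {}"
  shows "\<exists>t. (parent ^^ t) x \<notin> S"
proof (rule ccontr)
  assume "\<nexists>t. (parent ^^ t) x \<notin> S"
  moreover have "(parent ^^ t) ((parent ^^ a) x) = (parent ^^ (t + a)) x" for t a
    by (simp add: funpow_add)
  ultimately have in_S: "(parent ^^ t) ((parent ^^ a) x) \<in> S" for t a
    by simp
  obtain a p where "0 < p" "(parent ^^ p) ((parent ^^ a) x) = (parent ^^ a) x"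
    using funpow_eventually_periodic[OF assms(1)] in_S[where a = 0] by (metis funpow_0)
  then obtain C where "C \<in> cycles Es"
    using periodic_cycle in_S by metis
  then show False
    using assms(2) by simp
qed

end

section \<open>Generalized stems\<close>

lemma unique_in_edges_if_one_ingoing:
  assumes "one_ingoing n Vs Es" "S_disjoint Es"
  shows "unique_in_edges Es (Vs \<inter> Xset n)"
proof
  fix x assume "x \<in> Vs \<inter> Xset n"
  then have "card {e \<in> Es. hd_of e = x} = 1"
    using assms(1) unfolding one_ingoing_def by blast
  then show "\<exists>e\<in>Es. hd_of e = x"
    by (metis (mono_tags, lifting) card_1_singletonE mem_Collect_eq singletonI)
qed (rule assms(2))

lemma gen_stem_walk_to_state:
  assumes stem: "gen_stem n N m A B Vs Es" and x: "x \<in> Vs \<inter> Xset n"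
  obtains u es where "u \<in> Uset N m" "es \<noteq> []" "is_walk Es u es" "walk_end (u, es) = x"
proof -
  have sub: "is_subgraph (gc_V n N m) (gc_E n N m A B) Vs Es"
    using stem by (simp add: gen_stem_def)
  interpret unique_in_edges Es "Vs \<inter> Xset n"
    using stem unique_in_edges_if_one_ingoing by (simp add: gen_stem_def)
  obtain J where J: "(parent ^^ J) x \<notin> Vs \<inter> Xset n" "\<And>t. t < J \<Longrightarrow> (parent ^^ t) x \<in> Vs \<inter> Xset n"
    using orbit_leaves_if_acyclic[of x] stem exists_least_iff[of "\<lambda>t. (parent ^^ t) x \<notin> Vs \<inter> Xset n"]
    by (auto simp: gen_stem_def finite_Xset)
  then obtain j where j: "J = Suc j"
    using x by (metis funpow_0 not0_implies_Suc)
  then have "(parent ((parent ^^ j) x), parent_color ((parent ^^ j) x), (parent ^^ j) x) \<in> Es"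
    using J(2) parent_edge by blast
  then have "(parent ^^ J) x \<in> Vs"
    using sub j by (auto simp: is_subgraph_def tl_of_def)
  then have "(parent ^^ J) x \<in> Uset N m"
    using J(1) sub by (auto simp: is_subgraph_def gc_V_def)
  moreover have "back_walk J x \<noteq> []"
    using j by simp
  moreover have "is_walk Es ((parent ^^ J) x) (back_walk J x)"
    using J(2) is_walk_back_walk by blast
  ultimately show ?thesis
    using that walk_end_back_walk by blast
qed

lemma gen_stem_cactus_walking:
  assumes stem: "gen_stem n N m A B Vs Es" and Xs: "Xs \<subseteq> Vs" "Xs \<subseteq> Xset n"
  shows "\<exists>P. gen_cactus_walking n N m A B P \<and> walk_head ` P = Xs"
proof -
  have "\<forall>x\<in>Xs. \<exists>p. fst p \<in> Uset N m \<and> snd p \<noteq> [] \<and> is_walk Es (fst p) (snd p) \<and> walk_end p = x"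
  proof
    fix x assume "x \<in> Xs"
    then obtain u es where "u \<in> Uset N m" "es \<noteq> []" "is_walk Es u es" "walk_end (u, es) = x"
      using gen_stem_walk_to_state[OF stem, of x] Xs by blast
    then show "\<exists>p. fst p \<in> Uset N m \<and> snd p \<noteq> [] \<and> is_walk Es (fst p) (snd p) \<and> walk_end p = x"
      by (intro exI[of _ "(u, es)"]) simp
  qed
  then obtain W where "\<forall>x\<in>Xs. fst (W x) \<in> Uset N m \<and> snd (W x) \<noteq> []
      \<and> is_walk Es (fst (W x)) (snd (W x)) \<and> walk_end (W x) = x"
    by (rule bchoice[elim_format]) (elim exE)
  then have W: "\<And>x. x \<in> Xs \<Longrightarrow> fst (W x) \<in> Uset N m \<and> snd (W x) \<noteq> []
      \<and> is_walk Es (fst (W x)) (snd (W x)) \<and> walk_end (W x) = x"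
    by blast
  have Es: "Es \<subseteq> gc_E n N m A B" "S_disjoint Es"
    using stem by (auto simp: gen_stem_def is_subgraph_def)
  have heads: "walk_head (W x) = x" if "x \<in> Xs" for x
    using W[OF that] walk_head_eq_walk_end by simp
  have "input_state_walk n N m A B (W x)" if "x \<in> Xs" for x
    using W[OF that] heads[OF that] that Xs is_walk_mono[OF _ Es(1)]
    by (auto simp: input_state_walk_def walk_head_def)
  moreover have "x = y"
    if "x \<in> Xs" "y \<in> Xs" "i \<le> walk_len (W x)" "j \<le> walk_len (W y)"
      "colored_suffix (W x) i = colored_suffix (W y) j" for x y i j
  proof -
    have "walk_end (W x) = walk_end (W y)"
      using S_disjoint_walk_end_eq[OF Es(2)] W that by blast
    then show ?thesis
      using W that by simp
  qed
  ultimately show ?thesis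
    using gen_cactus_walking_image[of Xs n N m A B W] heads by blast
qed

section \<open>Generalized buds\<close>

locale unicyclic_in_edges = unique_in_edges +
  assumes finite_S: "finite S"
    and parent_closed: "\<And>x. x \<in> S \<Longrightarrow> parent x \<in> S"
    and unique_cycle: "\<exists>!C. C \<in> cycles Es"
begin

definition periodic_points :: "vert set" where
  "periodic_points = {z \<in> S. \<exists>p>0. (parent ^^ p) z = z}"

lemma funpow_parent_in_S: "x \<in> S \<Longrightarrow> (parent ^^ t) x \<in> S"
  by (induction t) (auto intro: parent_closed)

lemma funpow_parent_periodic:
  assumes x: "x \<in> S" and r: "card S \<le> r"
  shows "(parent ^^ r) x \<in> periodic_points"
proof -
  obtain a p where p: "0 < p" "a + p \<le> card S" "(parent ^^ p) ((parent ^^ a) x) = (parent ^^ a) x"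
    using funpow_eventually_periodic[OF finite_S] funpow_parent_in_S[OF x] by blast
  have "p + r = (r - a) + (p + a)"
    using p(2) r by simp
  then have "(parent ^^ p) ((parent ^^ r) x) = (parent ^^ ((r - a) + (p + a))) x"
    by (metis funpow_add comp_apply)
  also have "\<dots> = (parent ^^ ((r - a) + a)) x"
    using p(3) by (simp add: funpow_add)
  also have "\<dots> = (parent ^^ r) x"
    using p(2) r by simp
  finally show ?thesis
    using p(1) funpow_parent_in_S[OF x] unfolding periodic_points_def by blast
qed

lemma walk_start_periodic:
  "is_walk Es w r \<Longrightarrow> walk_end (w, r) \<in> S \<Longrightarrow> card S \<le> length r \<Longrightarrow> w \<in> periodic_points"
  using walk_start_eq_parent_funpow funpow_parent_periodic by metis

lemma periodic_points_connected:
  assumes "z \<in> periodic_points" "z' \<in> periodic_points"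
  shows "\<exists>t. (parent ^^ t) z = z'"
proof -
  obtain p p' where p: "0 < p" "(parent ^^ p) z = z" and p': "0 < p'" "(parent ^^ p') z' = z'"
    and S: "z \<in> S" "z' \<in> S"
    using assms unfolding periodic_points_def by blast
  obtain C where C: "C \<in> cycles Es" "\<And>e. e \<in> C \<Longrightarrow> \<exists>t<p. hd_of e = (parent ^^ t) z"
    using periodic_cycle[OF p] funpow_parent_in_S[OF S(1)] by metis
  obtain C' where C': "C' \<in> cycles Es" "(parent z', parent_color z', z') \<in> C'"
    using periodic_cycle[OF p'] funpow_parent_in_S[OF S(2)] by metis
  have "C = C'"
    using unique_cycle C(1) C'(1) by blast
  then show ?thesis
    using C(2)[of "(parent z', parent_color z', z')"] C'(2) by (auto simp: hd_of_def)
qed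

lemma reaches_periodic_point_late:
  assumes "x \<in> S" "v \<in> periodic_points"
  shows "\<exists>l\<ge>K. (parent ^^ l) x = v"
proof -
  have "(parent ^^ (K + card S)) x \<in> periodic_points"
    using funpow_parent_periodic[OF assms(1)] by simp
  then obtain t where "(parent ^^ t) ((parent ^^ (K + card S)) x) = v"
    using periodic_points_connected assms(2) by blast
  then show ?thesis
    by (intro exI[of _ "t + (K + card S)"]) (simp add: funpow_add)
qed

lemma long_walks_from_periodic_point:
  assumes "v \<in> periodic_points"
  obtains ws where "\<And>x. x \<in> S \<Longrightarrow> is_walk Es v (ws x)" "\<And>x. x \<in> S \<Longrightarrow> walk_end (v, ws x) = x"
    "\<And>x. x \<in> S \<Longrightarrow> K \<le> length (ws x)"
proof -
  have "\<forall>x\<in>S. \<exists>l. K \<le> l \<and> (parent ^^ l) x = v"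
    using reaches_periodic_point_late assms by blast
  then obtain L where L: "\<forall>x\<in>S. K \<le> L x \<and> (parent ^^ L x) x = v"
    by (rule bchoice[elim_format]) (elim exE)
  show ?thesis
  proof (rule that[of "\<lambda>x. back_walk (L x) x"])
    fix x assume "x \<in> S"
    then show "is_walk Es v (back_walk (L x) x)"
      using is_walk_back_walk[of "L x" x] funpow_parent_in_S L by simp
    show "walk_end (v, back_walk (L x) x) = x"
      using walk_end_back_walk[of "L x" x] L \<open>x \<in> S\<close> by simp
    show "K \<le> length (back_walk (L x) x)"
      using L \<open>x \<in> S\<close> by (simp add: length_back_walk)
  qed
qed

lemma entry_path_to_periodic_points:
  assumes "S \<noteq> {}" and reach: "\<forall>x\<in>S. input_reachable n N m A B x"
  obtains u P0 where "u \<in> Uset N m" "is_walk (gc_E n N m A B) u P0" "distinct (u # map snd P0)"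
    "walk_end (u, P0) \<in> periodic_points"
    "\<And>i. i < length P0 \<Longrightarrow> (u # map snd P0) ! i \<notin> periodic_points"
proof -
  obtain x where "x \<in> S"
    using assms(1) by blast
  then have z: "(parent ^^ card S) x \<in> periodic_points"
    using funpow_parent_periodic by blast
  then have "input_reachable n N m A B ((parent ^^ card S) x)"
    using reach by (simp add: periodic_points_def)
  then obtain u es where u: "u \<in> Uset N m" and path: "is_path (gc_E n N m A B) u es"
    and "es \<noteq> []" "snd (last es) = (parent ^^ card S) x"
    unfolding input_reachable_def by blast
  then have "walk_end (u, es) \<in> periodic_points"
    using z by (simp add: walk_end_def last_map)
  then obtain P0 where "is_walk (gc_E n N m A B) u P0" "distinct (u # map snd P0)"
    "walk_end (u, P0) \<in> periodic_points" "\<And>i. i < length P0 \<Longrightarrow> (u # map snd P0) ! i \<notin> periodic_points"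
    by (rule is_path_first_entry[OF path]) blast
  with u show ?thesis
    by (rule that)
qed

text \<open>The suffix starting at position a is at least card S steps long, so if it also started
  inside a walk of Es ending in S, its first vertex would be periodic.\<close>

lemma colored_suffix_prefix_ne_long_walk:
  assumes avoids: "\<And>i. i < length P0 \<Longrightarrow> (u # map snd P0) ! i \<notin> periodic_points"
    and v: "walk_end (u, P0) = v"
    and a: "a < length P0" and b: "length P0 \<le> b" "b \<le> length (P0 @ bs)"
    and walk: "is_walk Es v bs" "walk_end (v, bs) \<in> S" and long: "card S \<le> length as"
  shows "colored_suffix (u, P0 @ as) a \<noteq> colored_suffix (u, P0 @ bs) b"
proof
  let ?k = "b - length P0"
  let ?w = "(v # map snd bs) ! ?k"
  assume "colored_suffix (u, P0 @ as) a = colored_suffix (u, P0 @ bs) b"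
  then have "colored_suffix (v, bs) ?k = ((u # map snd P0) ! a, map fst (drop a P0) @ map fst as)"
    using a b colored_suffix_append_low colored_suffix_append_high v by metis
  then have "?w = (u # map snd P0) ! a" and "length (drop ?k bs) = length P0 - a + length as"
    unfolding colored_suffix_def by (auto dest: arg_cong[of _ _ length])
  moreover have "?w \<in> periodic_points"
  proof (rule walk_start_periodic)
    show "is_walk Es ?w (drop ?k bs)"
      using is_walk_drop b walk by simp
    show "walk_end (?w, drop ?k bs) \<in> S"
      using walk_end_drop b walk by simp
  qed (use long calculation(2) in simp)
  ultimately show False
    using avoids a by simp
qed

lemma colored_suffix_eq_through_entry:
  assumes distinct: "distinct (u # map snd P0)"
    and avoids: "\<And>i. i < length P0 \<Longrightarrow> (u # map snd P0) ! i \<notin> periodic_points"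
    and v: "walk_end (u, P0) = v"
    and walks: "is_walk Es v xs" "is_walk Es v ys"
    and ends: "walk_end (v, xs) \<in> S" "walk_end (v, ys) \<in> S"
    and long: "card S \<le> length xs" "card S \<le> length ys"
    and ij: "i \<le> length (P0 @ xs)" "j \<le> length (P0 @ ys)"
    and eq: "colored_suffix (u, P0 @ xs) i = colored_suffix (u, P0 @ ys) j"
  shows "walk_end (v, xs) = walk_end (v, ys)"
proof (cases "i < length P0"; cases "j < length P0")
  assume ij_low: "i < length P0" "j < length P0"
  then have "(u # map snd P0) ! i = (u # map snd P0) ! j"
    using eq colored_suffix_append_low by (metis prod.inject)
  then have "i = j"
    using nth_eq_iff_index_eq[OF distinct, of i j] ij_low by simp
  then have "colored_suffix (v, xs) 0 = colored_suffix (v, ys) 0"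
    using eq ij_low colored_suffix_append_low by (simp add: colored_suffix_def)
  then show ?thesis
    using S_disjoint_walk_end_eq[OF S_disjoint, of "(v, xs)" "(v, ys)" 0 0] walks
    by (simp add: walk_len_def)
next
  assume "\<not> i < length P0" "\<not> j < length P0"
  then have "colored_suffix (v, xs) (i - length P0) = colored_suffix (v, ys) (j - length P0)"
    using eq colored_suffix_append_high v by (metis not_less)
  then show ?thesis
    using S_disjoint_walk_end_eq[OF S_disjoint, of "(v, xs)" "(v, ys)" "i - length P0" "j - length P0"]
      walks ij
    by (simp add: walk_len_def)
qed (use colored_suffix_prefix_ne_long_walk[OF avoids v] ij long walks ends eq in
    \<open>metis not_less\<close>)+

end

lemma unicyclic_in_edges_if_gen_bud:
  assumes bud: "gen_bud n N m A B Vs Es"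
  shows "unicyclic_in_edges Es Vs"
proof -
  have sub: "is_subgraph (gc_V n N m) (gc_E n N m A B) Vs Es"
    using bud by (simp add: gen_bud_def)
  have Vs: "Vs \<subseteq> Xset n"
    using bud by (auto simp: gen_bud_def is_subgraph_def gc_V_def)
  then have "unique_in_edges Es Vs"
    using unique_in_edges_if_one_ingoing[of n Vs Es] bud by (simp add: gen_bud_def Int_absorb2)
  then interpret unique_in_edges Es Vs .
  show ?thesis
  proof
    show "finite Vs"
      using Vs finite_Xset finite_subset by blast
    show "parent x \<in> Vs" if "x \<in> Vs" for x
      using parent_edge[OF that] sub by (auto simp: is_subgraph_def tl_of_def)
    show "\<exists>!C. C \<in> cycles Es"
      using bud by (simp add: gen_bud_def)
  qed
qed

lemma gen_bud_prefixed_walks: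
  assumes bud: "gen_bud n N m A B Vs Es" and "Vs \<noteq> {}"
  obtains u P0 ws where "u \<in> Uset N m"
    "\<And>x. x \<in> Vs \<Longrightarrow> is_walk (gc_E n N m A B) u (P0 @ ws x)"
    "\<And>x. x \<in> Vs \<Longrightarrow> walk_end (u, P0 @ ws x) = x"
    "\<And>x. x \<in> Vs \<Longrightarrow> K < length (ws x)"
    "\<And>x y i j. x \<in> Vs \<Longrightarrow> y \<in> Vs \<Longrightarrow> i \<le> length (P0 @ ws x) \<Longrightarrow> j \<le> length (P0 @ ws y)
      \<Longrightarrow> colored_suffix (u, P0 @ ws x) i = colored_suffix (u, P0 @ ws y) j \<Longrightarrow> x = y"
proof -
  interpret unicyclic_in_edges Es Vs
    using unicyclic_in_edges_if_gen_bud[OF bud] .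
  have Es: "Es \<subseteq> gc_E n N m A B" and "Vs \<subseteq> Xset n"
    using bud by (auto simp: gen_bud_def is_subgraph_def gc_V_def)
  then have reach: "\<forall>x\<in>Vs. input_reachable n N m A B x"
    using bud by (auto simp: gen_bud_def)
  obtain u P0 where u: "u \<in> Uset N m" and P0: "is_walk (gc_E n N m A B) u P0"
    "distinct (u # map snd P0)" "walk_end (u, P0) \<in> periodic_points"
    and avoids: "\<And>i. i < length P0 \<Longrightarrow> (u # map snd P0) ! i \<notin> periodic_points"
    by (rule entry_path_to_periodic_points[OF \<open>Vs \<noteq> {}\<close> reach]) blast
  define v where "v = walk_end (u, P0)"
  obtain ws where ws: "\<And>x. x \<in> Vs \<Longrightarrow> is_walk Es v (ws x)" "\<And>x. x \<in> Vs \<Longrightarrow> walk_end (v, ws x) = x"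
    and long: "\<And>x. x \<in> Vs \<Longrightarrow> Suc (card Vs + K) \<le> length (ws x)"
    using long_walks_from_periodic_point P0(3) unfolding v_def by blast
  show ?thesis
  proof (rule that[of u P0 ws])
    show "u \<in> Uset N m"
      by (rule u)
  next
    fix x assume x: "x \<in> Vs"
    have "is_walk (gc_E n N m A B) v (ws x)"
      using ws(1)[OF x] is_walk_mono Es by blast
    then show "is_walk (gc_E n N m A B) u (P0 @ ws x)"
      using P0(1) by (simp add: is_walk_append v_def)
    show "walk_end (u, P0 @ ws x) = x"
      using ws(2)[OF x] by (simp add: walk_end_append v_def)
    show "K < length (ws x)"
      using long[OF x] by simp
  next
    fix x y i j assume xy: "x \<in> Vs" "y \<in> Vs"
      and "i \<le> length (P0 @ ws x)" "j \<le> length (P0 @ ws y)"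
      and "colored_suffix (u, P0 @ ws x) i = colored_suffix (u, P0 @ ws y) j"
    then have "walk_end (v, ws x) = walk_end (v, ws y)"
      using colored_suffix_eq_through_entry[OF P0(2) avoids v_def[symmetric] ws(1)[OF xy(1)] ws(1)[OF xy(2)]]
        ws(2) long[of x] long[of y]
      by simp
    then show "x = y"
      using ws(2) xy by simp
  qed
qed

lemma gen_bud_cactus_walking:
  assumes bud: "gen_bud n N m A B Vs Es" and Xs: "Xs \<subseteq> Vs"
  shows "\<exists>P. gen_cactus_walking n N m A B P \<and> walk_head ` P = Xs \<and> (\<forall>p\<in>P. M \<le> walk_len p)"
proof (cases "Xs = {}")
  case True
  then show ?thesis
    by (intro exI[of _ "{}"]) (simp add: gen_cactus_walking_def)
next
  case False
  then have "Vs \<noteq> {}"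
    using Xs by blast
  then obtain u P0 ws where u: "u \<in> Uset N m"
    and walks: "\<And>x. x \<in> Vs \<Longrightarrow> is_walk (gc_E n N m A B) u (P0 @ ws x)"
    and ends: "\<And>x. x \<in> Vs \<Longrightarrow> walk_end (u, P0 @ ws x) = x"
    and long: "\<And>x. x \<in> Vs \<Longrightarrow> M < length (ws x)"
    and separated: "\<And>x y i j. x \<in> Vs \<Longrightarrow> y \<in> Vs \<Longrightarrow> i \<le> length (P0 @ ws x)
      \<Longrightarrow> j \<le> length (P0 @ ws y) \<Longrightarrow> colored_suffix (u, P0 @ ws x) i = colored_suffix (u, P0 @ ws y) j
      \<Longrightarrow> x = y"
    by (rule gen_bud_prefixed_walks[OF bud]) blast
  define W where "W x = (u, P0 @ ws x)" for x
  have heads: "walk_head (W x) = x" if "x \<in> Xs" for x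
    using walk_head_eq_walk_end[of "W x"] ends long that Xs by (force simp: W_def)
  have "Vs \<subseteq> Xset n"
    using bud by (auto simp: gen_bud_def is_subgraph_def gc_V_def)
  then have "input_state_walk n N m A B (W x)" if "x \<in> Xs" for x
    using u walks long heads that Xs by (force simp: input_state_walk_def W_def walk_head_def)
  moreover have "x = y"
    if "x \<in> Xs" "y \<in> Xs" "i \<le> walk_len (W x)" "j \<le> walk_len (W y)"
      "colored_suffix (W x) i = colored_suffix (W y) j" for x y i j
    using separated[of x y i j] that Xs by (auto simp: W_def walk_len_def)
  ultimately have "gen_cactus_walking n N m A B (W ` Xs) \<and> walk_head ` W ` Xs = Xs"
    using gen_cactus_walking_image[of Xs n N m A B W] heads by blast
  moreover have "\<forall>p\<in>W ` Xs. M \<le> walk_len p"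
    using long Xs by (force simp: W_def walk_len_def)
  ultimately show ?thesis
    by blast
qed

theorem proposition2:
  fixes n N :: nat and m :: "nat \<Rightarrow> nat"
    and A B :: "nat \<Rightarrow> nat \<Rightarrow> nat \<Rightarrow> real"
    and Xs :: "vert set"
  assumes "Xs \<subseteq> Xset n"
  shows "((\<exists>Vs Es. gen_stem n N m A B Vs Es \<and> Xs \<subseteq> Vs) \<longrightarrow>
            (\<exists>P. gen_cactus_walking n N m A B P \<and> walk_head ` P = Xs))
       \<and> ((\<exists>Vs Es. gen_bud n N m A B Vs Es \<and> Xs \<subseteq> Vs) \<longrightarrow>
            (\<exists>P. gen_cactus_walking n N m A B P \<and> walk_head ` P = Xs)
            \<and> (\<forall>M::nat. \<exists>P. gen_cactus_walking n N m A B P \<and> walk_head ` P = Xs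
                            \<and> (\<forall>p\<in>P. walk_len p \<ge> M)))"
proof (intro conjI impI allI)
  assume "\<exists>Vs Es. gen_stem n N m A B Vs Es \<and> Xs \<subseteq> Vs"
  then obtain Vs Es where "gen_stem n N m A B Vs Es" "Xs \<subseteq> Vs" by blast
  then show "\<exists>P. gen_cactus_walking n N m A B P \<and> walk_head ` P = Xs"
    by (rule gen_stem_cactus_walking[OF _ _ assms])
next
  assume "\<exists>Vs Es. gen_bud n N m A B Vs Es \<and> Xs \<subseteq> Vs"
  then obtain Vs Es where "gen_bud n N m A B Vs Es" "Xs \<subseteq> Vs" by blast
  then have "\<exists>P. gen_cactus_walking n N m A B P \<and> walk_head ` P = Xs \<and> (\<forall>p\<in>P. 0 \<le> walk_len p)"
    by (rule gen_bud_cactus_walking)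
  then show "\<exists>P. gen_cactus_walking n N m A B P \<and> walk_head ` P = Xs"
    by blast
next
  fix M :: nat
  assume "\<exists>Vs Es. gen_bud n N m A B Vs Es \<and> Xs \<subseteq> Vs"
  then obtain Vs Es where "gen_bud n N m A B Vs Es" "Xs \<subseteq> Vs" by blast
  then show "\<exists>P. gen_cactus_walking n N m A B P \<and> walk_head ` P = Xs \<and> (\<forall>p\<in>P. walk_len p \<ge> M)"
    by (rule gen_bud_cactus_walking)
qed

end
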